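(* Let $n\ge2$ be even, let $Q(x)=\sum_{i=1}^{n/2-1}Tr_1^n(x^{2^i+1})+Tr_1^{n/2}(x^{2^{n/2}+1})$ on $\mathbb{F}_{2^n}$, and let $f:\mathbb{F}_{2^n}\to\mathbb{F}_2$. Then $f$ is bent-negabent if and only if both $f$ and $f+Q$ are bent.
   Context: $Tr_1^m(z)=z+z^2+\dots+z^{2^{m-1}}$; $Tr=Tr_1^n$. Fix a self-dual basis $\{\alpha_i\}$ of $\mathbb{F}_{2^n}$ over $\mathbb{F}_2$ ($Tr(\alpha_i\alpha_j)=\delta_{ij}$), identify $\mathbb{F}_{2^n}$ with $\mathbb{F}_2^n$ via coordinates, and let $wt(x)$ be the number of nonzero coordinates. For $g:\mathbb{F}_{2^n}\to\mathbb{F}_2$: $g$ is bent if $\left|\sum_x(-1)^{g(x)+Tr(\mu x)}\right|=2^{n/2}$ for all $\mu$; negabent if $\left|\sum_x(-1)^{g(x)+Tr(\mu x)}\mathrm{i}^{wt(x)}\right|=2^{n/2}$ for all $\mu$ ($\mathrm{i}=\sqrt{-1}$); bent-negabent if both. *)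

theory Defs
  imports Complex_Main
begin

definition tr :: "nat \<Rightarrow> 'a::field \<Rightarrow> 'a" where
  "tr m z = (\<Sum>i<m. z ^ (2 ^ i))"

text \<open>Boolean functions take values in F_2 = {0,1}, a subfield of the field 'a.
  sgn2 y = (-1)^y for y in F_2.\<close>
definition sgn2 :: "'a::field \<Rightarrow> complex" where
  "sgn2 y = (if y = 0 then 1 else -1)"

text \<open>Hamming weight of x: number of nonzero coordinates of x w.r.t. the basis
  alpha_0,...,alpha_(n-1); the support S is the unique subset with x = sum of alpha_i, i in S.\<close>
definition wt :: "(nat \<Rightarrow> 'a::field) \<Rightarrow> nat \<Rightarrow> 'a \<Rightarrow> nat" where
  "wt alpha n x = card (THE S. S \<subseteq> {..<n} \<and> x = (\<Sum>i\<in>S. alpha i))"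

definition self_dual_basis :: "nat \<Rightarrow> (nat \<Rightarrow> 'a::{field,finite}) \<Rightarrow> bool" where
  "self_dual_basis n alpha \<longleftrightarrow>
     bij_betw (\<lambda>S. \<Sum>i\<in>S. alpha i) (Pow {..<n}) (UNIV :: 'a set) \<and>
     (\<forall>i<n. \<forall>j<n. tr n (alpha i * alpha j) = (if i = j then 1 else 0))"

definition bent :: "nat \<Rightarrow> ('a::{field,finite} \<Rightarrow> 'a) \<Rightarrow> bool" where
  "bent n g \<longleftrightarrow> (\<forall>\<mu>::'a.
     cmod (\<Sum>x\<in>UNIV. sgn2 (g x + tr n (\<mu> * x))) = sqrt (2 ^ n))"

definition negabent :: "nat \<Rightarrow> (nat \<Rightarrow> 'a::{field,finite}) \<Rightarrow> ('a \<Rightarrow> 'a) \<Rightarrow> bool" where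
  "negabent n alpha g \<longleftrightarrow> (\<forall>\<mu>::'a.
     cmod (\<Sum>x\<in>UNIV. sgn2 (g x + tr n (\<mu> * x)) * \<i> ^ wt alpha n x) = sqrt (2 ^ n))"

definition bent_negabent :: "nat \<Rightarrow> (nat \<Rightarrow> 'a::{field,finite}) \<Rightarrow> ('a \<Rightarrow> 'a) \<Rightarrow> bool" where
  "bent_negabent n alpha g \<longleftrightarrow> bent n g \<and> negabent n alpha g"

definition Qfun :: "nat \<Rightarrow> 'a::field \<Rightarrow> 'a" where
  "Qfun n x = (\<Sum>i\<in>{1..<n div 2}. tr n (x ^ (2 ^ i + 1)))
              + tr (n div 2) (x ^ (2 ^ (n div 2) + 1))"

end

theory Submission
  imports Defs
begin

text \<open>With respect to a self-dual basis, \<open>\<omega>(x) = \<i>^wt(x)\<close> satisfies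
  \<open>\<omega>(x + y) = \<omega>(x) \<omega>(y) (-1)^Tr(xy)\<close>, while \<open>Q\<close> polarizes as
  \<open>Q(x + y) = Q(x) + Q(y) + Tr(x) Tr(y) + Tr(xy)\<close>. The discrepancy \<open>Tr(x) Tr(y)\<close> is
  exactly the defect of \<open>t \<mapsto> \<i>^t\<close> on bits, so \<open>\<omega>(x) (-1)^Q(x) \<i>^-Tr(x)\<close> is an
  additive character, i.e. equal to \<open>(-1)^Tr(\<lambda>x)\<close> for some \<open>\<lambda>\<close>. Writing
  \<open>\<i>^t = ((1 + \<i>) + (1 - \<i>) (-1)^t) / 2\<close> turns the nega-Hadamard transform of \<open>f\<close>
  at \<open>u\<close> into \<open>((1 + \<i>) W(u + \<lambda>) + (1 - \<i>) W(u + \<lambda> + 1)) / 2\<close>, where \<open>W\<close> is the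
  Walsh transform of \<open>f + Q\<close>; its squared modulus is \<open>(W(u + \<lambda>)^2 + W(u + \<lambda> + 1)^2) / 2\<close>.
  Since \<open>n\<close> is even, an integer solution of \<open>a^2 + b^2 = 2^(n+1)\<close> has \<open>a^2 = b^2 = 2^n\<close>,
  so \<open>f\<close> is negabent if and only if \<open>f + Q\<close> is bent.\<close>

lemma sum_squares_eq_odd_power_two:
  fixes a b :: int
  assumes "a\<^sup>2 + b\<^sup>2 = 2 ^ (2 * k + 1)"
  shows "a\<^sup>2 = 2 ^ (2 * k)"
  using assms
proof (induction k arbitrary: a b)
  case 0
  then have sum: "a\<^sup>2 + b\<^sup>2 = 2" by simp
  then have "a\<^sup>2 \<le> 2" "b\<^sup>2 \<le> 2"
    using zero_le_power2[of a] zero_le_power2[of b] by linarith+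
  then have "\<bar>a\<bar> < 2" "\<bar>b\<bar> < 2"
    using abs_le_square_iff[of 2 a] abs_le_square_iff[of 2 b] by auto
  then have "a \<in> {-1, 0, 1}" "b \<in> {-1, 0, 1}" by auto
  then show ?case using sum by auto
next
  case (Suc k)
  have sum: "a\<^sup>2 + b\<^sup>2 = 4 * 2 ^ (2 * k + 1)"
    using Suc.prems by (simp add: power_add)
  show ?case
  proof (cases "even a")
    case True
    then obtain c where c: "a = 2 * c" by blast
    have "b\<^sup>2 = 2 * (2 * 2 ^ (2 * k + 1) - 2 * c\<^sup>2)"
      using sum c by (simp add: algebra_simps power2_eq_square)
    then have "even (b\<^sup>2)" by simp
    then have "even b" by simp
    then obtain d where d: "b = 2 * d" by blast
    have "c\<^sup>2 + d\<^sup>2 = 2 ^ (2 * k + 1)" using sum c d by (simp add: power_mult_distrib)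
    then have "c\<^sup>2 = 2 ^ (2 * k)" by (rule Suc.IH)
    then show ?thesis using c by (simp add: power_mult_distrib power_add)
  next
    case False
    then obtain c where c: "a = 2 * c + 1" by (metis oddE)
    have "b\<^sup>2 = 2 * (2 * 2 ^ (2 * k + 1) - 2 * c\<^sup>2 - 2 * c - 1) + 1"
      using sum c by (simp add: algebra_simps power2_eq_square)
    then have "odd (b\<^sup>2)" by simp
    then have "odd b" by simp
    then obtain d where d: "b = 2 * d + 1" by (metis oddE)
    \<comment> \<open>two odd squares sum to 2 modulo 4, but the right-hand side is divisible by 4\<close>
    have "a\<^sup>2 + b\<^sup>2 = 4 * (c\<^sup>2 + c + d\<^sup>2 + d) + 2"
      using c d by (simp add: algebra_simps power2_eq_square)
    with sum have "4 * (2 ^ (2 * k + 1) - (c\<^sup>2 + c + d\<^sup>2 + d)) = (2::int)"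
      by (simp add: algebra_simps)
    then show ?thesis by presburger
  qed
qed

lemma norm_eq_sqrt_iff: "norm z = sqrt x \<longleftrightarrow> (norm z)\<^sup>2 = x" if "0 \<le> x"
  using that real_sqrt_unique[of "norm z" x] by auto

lemma cmod_half_combination_eq_sqrt_iff:
  fixes a b :: int
  shows "cmod ((1 + \<i>) / 2 * of_int a + (1 - \<i>) / 2 * of_int b) = sqrt (2 ^ n)
    \<longleftrightarrow> a\<^sup>2 + b\<^sup>2 = 2 ^ (n + 1)"
proof -
  let ?z = "(1 + \<i>) / 2 * of_int a + (1 - \<i>) / 2 * of_int b"
  have "?z = Complex ((a + b) / 2) ((a - b) / 2)"
    by (simp add: complex_eq_iff)
  then have norm_sq: "(cmod ?z)\<^sup>2 = real_of_int (a\<^sup>2 + b\<^sup>2) / 2"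
    by (simp only: cmod_power2 complex.sel) (simp add: power2_eq_square field_simps)
  have "cmod ?z = sqrt (2 ^ n) \<longleftrightarrow> real_of_int (a\<^sup>2 + b\<^sup>2) / 2 = 2 ^ n"
    unfolding norm_sq[symmetric] by (simp add: norm_eq_sqrt_iff)
  also have "\<dots> \<longleftrightarrow> real_of_int (a\<^sup>2 + b\<^sup>2) = 2 ^ (n + 1)"
    by auto
  also have "\<dots> \<longleftrightarrow> a\<^sup>2 + b\<^sup>2 = 2 ^ (n + 1)"
    by (metis of_int_eq_iff of_int_numeral of_int_power)
  finally show ?thesis .
qed

lemma sum_reflect_halves:
  fixes g :: "nat \<Rightarrow> 'b::comm_monoid_add"
  assumes "1 \<le> m"
  shows "(\<Sum>i\<in>{1..<m}. g (m + m - i) + g i) + g m = (\<Sum>k\<in>{1..<m + m}. g k)"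
proof -
  have "(\<Sum>i\<in>{1..<m}. g (m + m - i)) = (\<Sum>k\<in>{m + 1..<m + m}. g k)"
    by (rule sum.reindex_bij_witness[where i="\<lambda>k. m + m - k" and j="\<lambda>k. m + m - k"]) auto
  then have "(\<Sum>i\<in>{1..<m}. g (m + m - i) + g i) + g m
      = ((\<Sum>k\<in>{1..<m}. g k) + g m) + (\<Sum>k\<in>{m + 1..<m + m}. g k)"
    by (simp add: sum.distrib ac_simps)
  also have "(\<Sum>k\<in>{1..<m}. g k) + g m = (\<Sum>k\<in>{1..<m + 1}. g k)"
    using assms by simp
  also have "\<dots> + (\<Sum>k\<in>{m + 1..<m + m}. g k) = (\<Sum>k\<in>{1..<m + m}. g k)"
    using assms by (intro sum.atLeastLessThan_concat) auto
  finally show ?thesis .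
qed

lemma card_sym_diff_add_double_Int:
  assumes "finite A" and "finite B"
  shows "card ((A - B) \<union> (B - A)) + 2 * card (A \<inter> B) = card A + card B"
  using assms card_Int_Diff[of A B] card_Int_Diff[of B A]
  by (simp add: card_Un_disjoint Int_commute Diff_Int_distrib2 disjoint_iff)

lemma finite_field_power_card: "x ^ card (UNIV :: 'a set) = (x :: 'a::{field,finite})"
proof (cases "x = 0")
  case False
  define G where "G = UNIV - {0 :: 'a}"
  have "bij_betw (\<lambda>y. x * y) G G"
    by (rule bij_betw_byWitness[where f'="\<lambda>y. y / x"]) (auto simp: G_def False)
  then have "prod (\<lambda>y. y) G = prod (\<lambda>y. x * y) G"
    using prod.reindex_bij_betw[of "\<lambda>y. x * y" G G "\<lambda>y. y"] by simp
  also have "\<dots> = x ^ card G * prod (\<lambda>y. y) G"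
    by (simp add: prod.distrib)
  finally have "x ^ card G = 1" by (simp add: G_def)
  moreover have "card (UNIV :: 'a set) = Suc (card G)"
    using finite_UNIV_card_ge_0[where 'a='a] by (simp add: G_def card_Diff_subset)
  ultimately show ?thesis by simp
qed (simp add: finite_UNIV_card_ge_0)

definition is_bit :: "'a::zero_neq_one \<Rightarrow> bool" where
  "is_bit t \<longleftrightarrow> t = 0 \<or> t = 1"

lemma is_bit_mult: "is_bit a \<Longrightarrow> is_bit b \<Longrightarrow> is_bit (a * b :: 'a::field)"
  by (auto simp: is_bit_def)

lemma is_bit_if_square_eq: "t\<^sup>2 = t \<Longrightarrow> is_bit (t :: 'a::field)"
  by (auto simp: is_bit_def power2_eq_square)

lemma sgn2_mult_self [simp]: "sgn2 a * sgn2 a = 1"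
  by (simp add: sgn2_def)

lemma tr_zero [simp]: "tr m 0 = 0"
  by (simp add: tr_def zero_power)

lemma tr_mult_bit: "is_bit c \<Longrightarrow> tr m (c * x) = c * tr m x"
  by (auto simp: is_bit_def tr_def zero_power)

lemma tr_double: "tr (m + m) w = tr m w + tr m (w ^ 2 ^ m)"
proof -
  have "tr (m + m) w = (\<Sum>i<m. w ^ 2 ^ i) + (\<Sum>i\<in>{m..<m + m}. w ^ 2 ^ i)"
    by (simp add: tr_def lessThan_atLeast0 sum.atLeastLessThan_concat)
  also have "(\<Sum>i\<in>{m..<m + m}. w ^ 2 ^ i) = (\<Sum>i<m. (w ^ 2 ^ m) ^ 2 ^ i)"
    using sum.shift_bounds_nat_ivl[of "\<lambda>i. w ^ 2 ^ i" 0 m m]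
    by (simp add: lessThan_atLeast0 power_mult[symmetric] power_add mult.commute)
  finally show ?thesis by (simp add: tr_def)
qed

definition ipow_bit :: "'a::zero \<Rightarrow> complex" where
  "ipow_bit t = (if t = 0 then 1 else \<i>)"

lemma ipow_bit_eq: "is_bit t \<Longrightarrow> ipow_bit t = (1 + \<i>) / 2 + (1 - \<i>) / 2 * sgn2 t"
  by (auto simp: is_bit_def ipow_bit_def sgn2_def field_simps)

definition walsh :: "nat \<Rightarrow> ('a::{field,finite} \<Rightarrow> 'a) \<Rightarrow> 'a \<Rightarrow> int" where
  "walsh n g v = (\<Sum>x\<in>UNIV. if g x + tr n (v * x) = 0 then 1 else -1)"

lemma sum_sgn2_eq_walsh:
  "(\<Sum>x\<in>UNIV. sgn2 (g x + tr n (v * x))) = of_int (walsh n g v)"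
  unfolding walsh_def of_int_sum by (rule sum.cong) (auto simp: sgn2_def)

lemma bent_iff_walsh: "bent n g \<longleftrightarrow> (\<forall>v. (walsh n g v)\<^sup>2 = 2 ^ n)"
proof -
  have "cmod (of_int w) = sqrt (2 ^ n) \<longleftrightarrow> w\<^sup>2 = 2 ^ n" for w :: int
  proof -
    have "cmod (of_int w) = sqrt (2 ^ n) \<longleftrightarrow> (cmod (of_int w))\<^sup>2 = 2 ^ n"
      by (rule norm_eq_sqrt_iff) simp
    also have "\<dots> \<longleftrightarrow> (real_of_int w)\<^sup>2 = 2 ^ n"
      by (simp only: norm_of_int power2_abs)
    also have "\<dots> \<longleftrightarrow> w\<^sup>2 = 2 ^ n" by (metis of_int_eq_iff of_int_numeral of_int_power)
    finally show ?thesis .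
  qed
  then show ?thesis unfolding bent_def sum_sgn2_eq_walsh by simp
qed

context
  assumes char2: "(2::'a::field) = 0"
begin

lemma add_self_eq_zero [simp]: "x + x = (0::'a)"
  by (metis mult_2 char2 mult_zero_left)

lemma frobenius_add: "(x + y) ^ 2 ^ k = x ^ 2 ^ k + (y::'a) ^ 2 ^ k"
proof (induction k)
  case (Suc k)
  have "(x + y) ^ 2 ^ Suc k = ((x + y) ^ 2 ^ k)\<^sup>2"
    by (simp add: power_mult[symmetric] mult.commute)
  also have "\<dots> = (x ^ 2 ^ k)\<^sup>2 + (y ^ 2 ^ k)\<^sup>2 + 2 * x ^ 2 ^ k * y ^ 2 ^ k"
    unfolding Suc power2_sum ..
  also have "\<dots> = x ^ 2 ^ Suc k + y ^ 2 ^ Suc k"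
    by (simp add: char2 power_mult[symmetric] mult.commute)
  finally show ?case .
qed simp

lemma frobenius_sum: "(\<Sum>i\<in>A. f i) ^ 2 ^ k = (\<Sum>i\<in>A. (f i :: 'a) ^ 2 ^ k)"
  by (induction A rule: infinite_finite_induct) (simp_all add: frobenius_add)

lemma tr_add: "tr m (x + y) = tr m x + tr m (y::'a)"
  by (simp add: tr_def frobenius_add sum.distrib)

lemma tr_sum: "tr m (\<Sum>i\<in>A. f i) = (\<Sum>i\<in>A. tr m (f i :: 'a))"
  by (induction A rule: infinite_finite_induct) (simp_all add: tr_add)

lemma tr_power_two_power: "tr m z ^ 2 ^ k = tr m ((z::'a) ^ 2 ^ k)"
  unfolding tr_def frobenius_sum by (simp add: power_mult[symmetric] mult.commute)

lemma add_eq_iff_eq_add: "a + b = c \<longleftrightarrow> a = c + (b::'a)"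
  by (auto simp: add.assoc)

lemma tr_square: "tr m ((z::'a)\<^sup>2) = tr m z + z + z ^ 2 ^ m"
proof -
  have "tr m (z\<^sup>2) = (\<Sum>i<m. z ^ 2 ^ Suc i)"
    unfolding tr_def by (simp add: power_mult[symmetric] mult.commute)
  also have "\<dots> = tr m z + z ^ 2 ^ m + z"
  proof -
    have "z + (\<Sum>i<m. z ^ 2 ^ Suc i) = tr m z + z ^ 2 ^ m"
      using sum.lessThan_Suc_shift[of "\<lambda>i. z ^ 2 ^ i" m] by (simp add: tr_def)
    then show ?thesis by (metis add.commute add_eq_iff_eq_add)
  qed
  finally show ?thesis by (simp add: ac_simps)
qed

lemma tr_is_bit_if:
  assumes "(z::'a) ^ 2 ^ m = z"
  shows "is_bit (tr m z)"
proof (rule is_bit_if_square_eq)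
  have "(tr m z)\<^sup>2 = tr m (z\<^sup>2)"
    using tr_power_two_power[of m z 1] by simp
  also have "\<dots> = tr m z"
    using assms by (simp add: tr_square add.assoc char2)
  finally show "(tr m z)\<^sup>2 = tr m z" .
qed

lemma is_bit_add: "is_bit a \<Longrightarrow> is_bit b \<Longrightarrow> is_bit (a + b :: 'a)"
  by (auto simp: is_bit_def)

lemma is_bit_sum: "(\<And>i. i \<in> A \<Longrightarrow> is_bit (f i)) \<Longrightarrow> is_bit (\<Sum>i\<in>A. f i :: 'a)"
  by (induction A rule: infinite_finite_induct) (simp_all add: is_bit_add, simp_all add: is_bit_def)

lemma of_nat_parity: "(of_nat k :: 'a) = (if even k then 0 else 1)"
  by (induction k) (simp_all add: char2)

lemma sgn2_add: "is_bit a \<Longrightarrow> is_bit b \<Longrightarrow> sgn2 (a + b :: 'a) = sgn2 a * sgn2 b"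
  by (auto simp: is_bit_def sgn2_def)

lemma sgn2_of_nat: "sgn2 (of_nat k :: 'a) = (-1) ^ k"
  by (simp add: sgn2_def of_nat_parity)

lemma cnj_ipow_bit_add:
  "is_bit a \<Longrightarrow> is_bit b
    \<Longrightarrow> cnj (ipow_bit (a + b :: 'a)) = cnj (ipow_bit a) * cnj (ipow_bit b) * sgn2 (a * b)"
  by (auto simp: is_bit_def ipow_bit_def sgn2_def)

end

context
  fixes n :: nat
  assumes char2: "(2::'a::{field,finite}) = 0"
    and card_UNIV: "card (UNIV :: 'a set) = 2 ^ n"
begin

lemma power_two_power_n_eq: "x ^ 2 ^ n = (x::'a)"
  by (metis card_UNIV finite_field_power_card)

lemma tr_is_bit: "is_bit (tr n (z::'a))"
  by (rule tr_is_bit_if[OF char2 power_two_power_n_eq])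

lemma tr_frobenius: "tr n ((z::'a) ^ 2 ^ k) = tr n z"
proof (induction k)
  case (Suc k)
  have "tr n (z ^ 2 ^ Suc k) = tr n ((z ^ 2 ^ k)\<^sup>2)"
    by (simp add: power_mult[symmetric] mult.commute)
  also have "\<dots> = tr n (z ^ 2 ^ k)"
    using tr_square[OF char2, of n "z ^ 2 ^ k"] by (simp add: power_two_power_n_eq char2)
  finally show ?case using Suc by simp
qed simp

lemma tr_mult_frobenius_adjoint:
  assumes "i \<le> n"
  shows "tr n (x ^ 2 ^ i * y) = tr n (x * (y::'a) ^ 2 ^ (n - i))"
proof -
  have "(x ^ 2 ^ i * y) ^ 2 ^ (n - i) = x * y ^ 2 ^ (n - i)"
    using assms by (simp add: power_mult_distrib power_mult[symmetric] power_add[symmetric]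
        power_two_power_n_eq)
  then show ?thesis using tr_frobenius[of "x ^ 2 ^ i * y" "n - i"] by simp
qed

lemma sum_tr_mult_conjugates:
  assumes "1 \<le> n"
  shows "(\<Sum>k\<in>{1..<n}. tr n (x * y ^ 2 ^ k)) = tr n x * tr n y + tr n (x * (y::'a))"
proof -
  have "tr n y = y + (\<Sum>k\<in>{1..<n}. y ^ 2 ^ k)"
    using assms by (simp add: tr_def lessThan_atLeast0 sum.atLeast_Suc_lessThan)
  then have "(\<Sum>k\<in>{1..<n}. y ^ 2 ^ k) = tr n y + y"
    by (metis add.commute add_eq_iff_eq_add[OF char2])
  moreover have "(\<Sum>k\<in>{1..<n}. tr n (x * y ^ 2 ^ k)) = tr n (x * (\<Sum>k\<in>{1..<n}. y ^ 2 ^ k))"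
    by (simp add: sum_distrib_left tr_sum[OF char2])
  ultimately have "(\<Sum>k\<in>{1..<n}. tr n (x * y ^ 2 ^ k)) = tr n (tr n y * x) + tr n (x * y)"
    by (simp add: distrib_left tr_add[OF char2] mult.commute)
  also have "\<dots> = tr n x * tr n y + tr n (x * y)"
    by (subst tr_mult_bit[OF tr_is_bit]) (simp add: mult.commute)
  finally show ?thesis .
qed

lemma Qfun_is_bit:
  assumes "even n"
  shows "is_bit (Qfun n (x::'a))"
proof -
  define m where "m = n div 2"
  have "(x ^ (2 ^ m + 1)) ^ 2 ^ m = x ^ (2 ^ m * 2 ^ m) * x ^ 2 ^ m"
    by (simp add: power_mult[symmetric] power_add algebra_simps)
  also have "(2::nat) ^ m * 2 ^ m = 2 ^ n"
    using assms unfolding m_def power_add[symmetric] by (metis even_two_times_div_two mult_2)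
  finally have "(x ^ (2 ^ m + 1)) ^ 2 ^ m = x ^ (2 ^ m + 1)"
    by (simp add: power_two_power_n_eq power_add mult.commute)
  then have "is_bit (tr m (x ^ (2 ^ m + 1)))" by (rule tr_is_bit_if[OF char2])
  then show ?thesis
    unfolding Qfun_def m_def[symmetric]
    by (intro is_bit_add[OF char2] is_bit_sum[OF char2] tr_is_bit)
qed

text \<open>With \<open>m = n/2\<close>, each cross term \<open>Tr(x^(2^i) y)\<close> (\<open>0 < i < m\<close>) is conjugate to
  \<open>Tr(x y^(2^(n-i)))\<close>, and the two half-traces at \<open>i = m\<close> add up to \<open>Tr(x y^(2^m))\<close>; so the
  cross terms are \<open>Tr(x y^(2^k))\<close> for all \<open>0 < k < n\<close>.\<close>
lemma Qfun_add:
  assumes "even n" and "2 \<le> n"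
  shows "Qfun n (x + y) = Qfun n x + Qfun n y + tr n x * tr n y + tr n (x * y :: 'a)"
proof -
  define m where "m = n div 2"
  have n: "m + m = n" and m: "1 \<le> m" using assms by (auto simp: m_def)
  define h where "h k = tr n (x * y ^ 2 ^ k)" for k
  have cross: "tr k ((x + y) ^ (2 ^ i + 1)) = tr k (x ^ (2 ^ i + 1)) + tr k (y ^ (2 ^ i + 1))
      + (tr k (x ^ 2 ^ i * y) + tr k (x * y ^ 2 ^ i))" for k i
    by (simp add: power_add frobenius_add[OF char2] tr_add[OF char2] algebra_simps)
  have "Qfun n (x + y) = Qfun n x + Qfun n y + ((\<Sum>i\<in>{1..<m}. tr n (x ^ 2 ^ i * y) + h i)
      + (tr m (x ^ 2 ^ m * y) + tr m (x * y ^ 2 ^ m)))"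
    unfolding Qfun_def m_def[symmetric] cross sum.distrib h_def by (simp only: ac_simps)
  also have "(\<Sum>i\<in>{1..<m}. tr n (x ^ 2 ^ i * y) + h i) = (\<Sum>i\<in>{1..<m}. h (n - i) + h i)"
  proof (rule sum.cong)
    fix i assume "i \<in> {1..<m}"
    then have "i \<le> n" using n by simp
    then show "tr n (x ^ 2 ^ i * y) + h i = h (n - i) + h i"
      by (simp add: h_def tr_mult_frobenius_adjoint)
  qed simp
  also have "tr m (x ^ 2 ^ m * y) + tr m (x * y ^ 2 ^ m) = h m"
  proof -
    have "(x * y ^ 2 ^ m) ^ 2 ^ m = x ^ 2 ^ m * y ^ 2 ^ n"
      by (simp add: power_mult_distrib power_mult[symmetric] n[symmetric] flip: power_add)
    then show ?thesis
      using tr_double[of m "x * y ^ 2 ^ m"] by (simp add: h_def n power_two_power_n_eq add.commute)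
  qed
  also have "(\<Sum>i\<in>{1..<m}. h (n - i) + h i) + h m = (\<Sum>k\<in>{1..<n}. h k)"
    using sum_reflect_halves[OF m, of h] by (simp only: n)
  also have "\<dots> = tr n x * tr n y + tr n (x * y)"
    using assms sum_tr_mult_conjugates[of x y] by (simp add: h_def)
  finally show ?thesis by (simp only: ac_simps)
qed

end

locale self_dual_gf2n =
  fixes n :: nat and alpha :: "nat \<Rightarrow> 'a::{field,finite}"
  assumes char2: "(2::'a) = 0"
    and card_UNIV: "card (UNIV :: 'a set) = 2 ^ n"
    and self_dual: "self_dual_basis n alpha"
begin

definition basis_sum :: "nat set \<Rightarrow> 'a" where
  "basis_sum S = (\<Sum>i\<in>S. alpha i)"

lemma bij_basis_sum: "bij_betw basis_sum (Pow {..<n}) UNIV"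
  using self_dual unfolding self_dual_basis_def basis_sum_def by blast

lemma tr_alpha_mult_alpha:
  "i < n \<Longrightarrow> j < n \<Longrightarrow> tr n (alpha i * alpha j) = (if i = j then 1 else 0)"
  using self_dual unfolding self_dual_basis_def by blast

lemma obtain_basis_sum:
  obtains S where "S \<subseteq> {..<n}" and "x = basis_sum S"
  using bij_basis_sum unfolding bij_betw_def by (metis PowD UNIV_I imageE)

lemma wt_basis_sum:
  assumes "S \<subseteq> {..<n}"
  shows "wt alpha n (basis_sum S) = card S"
proof -
  have "(THE S'. S' \<subseteq> {..<n} \<and> basis_sum S = (\<Sum>i\<in>S'. alpha i)) = S"
  proof (rule the_equality)
    show "S \<subseteq> {..<n} \<and> basis_sum S = (\<Sum>i\<in>S. alpha i)"
      using assms by (simp add: basis_sum_def)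
  next
    fix S' assume "S' \<subseteq> {..<n} \<and> basis_sum S = (\<Sum>i\<in>S'. alpha i)"
    then show "S' = S"
      using bij_basis_sum assms unfolding bij_betw_def inj_on_def basis_sum_def by blast
  qed
  then show ?thesis unfolding wt_def by simp
qed

lemma tr_basis_sum_mult:
  assumes A: "A \<subseteq> {..<n}" and B: "B \<subseteq> {..<n}"
  shows "tr n (basis_sum A * basis_sum B) = of_nat (card (A \<inter> B))"
proof -
  have fin: "finite A" "finite B" using A B finite_subset by blast+
  have "tr n (basis_sum A * basis_sum B) = (\<Sum>i\<in>A. \<Sum>j\<in>B. tr n (alpha i * alpha j))"
    by (simp add: basis_sum_def sum_product tr_sum[OF char2])
  also have "\<dots> = (\<Sum>i\<in>A. if i \<in> B then 1 else 0)"
    using A B fin by (intro sum.cong) (auto simp: tr_alpha_mult_alpha subset_iff)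
  also have "\<dots> = of_nat (card (A \<inter> B))"
    using fin by (simp add: sum.If_cases Int_def)
  finally show ?thesis .
qed

lemma basis_sum_add:
  assumes "finite A" and "finite B"
  shows "basis_sum A + basis_sum B = basis_sum ((A - B) \<union> (B - A))"
proof -
  have "basis_sum (A \<union> B) = basis_sum (((A - B) \<union> (B - A)) \<union> (A \<inter> B))"
    by (rule arg_cong[where f=basis_sum]) blast
  also have "\<dots> = basis_sum ((A - B) \<union> (B - A)) + basis_sum (A \<inter> B)"
    unfolding basis_sum_def using assms by (intro sum.union_disjoint) auto
  finally have "basis_sum (A \<union> B) = basis_sum ((A - B) \<union> (B - A)) + basis_sum (A \<inter> B)" .
  then show ?thesis
    using assms sum.union_inter[of A B alpha]
    by (simp add: basis_sum_def add.assoc add_self_eq_zero[OF char2])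
qed

text \<open>The weight of a sum drops by twice the size of the common support.\<close>
lemma i_power_wt_add:
  "\<i> ^ wt alpha n (x + y) = \<i> ^ wt alpha n x * \<i> ^ wt alpha n y * sgn2 (tr n (x * y))"
proof -
  obtain A where A: "A \<subseteq> {..<n}" "x = basis_sum A" by (rule obtain_basis_sum)
  obtain B where B: "B \<subseteq> {..<n}" "y = basis_sum B" by (rule obtain_basis_sum)
  have fin: "finite A" "finite B" using A B finite_subset by blast+
  have D: "(A - B) \<union> (B - A) \<subseteq> {..<n}" using A B by blast
  define c where "c = card (A \<inter> B)"
  have "\<i> ^ wt alpha n x * \<i> ^ wt alpha n y = \<i> ^ (card ((A - B) \<union> (B - A)) + 2 * c)"
    using A B card_sym_diff_add_double_Int[OF fin] by (simp add: wt_basis_sum c_def power_add)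
  also have "\<dots> = \<i> ^ wt alpha n (x + y) * (-1) ^ c"
    using A B D fin by (simp add: basis_sum_add wt_basis_sum power_add power_mult)
  finally have "\<i> ^ wt alpha n x * \<i> ^ wt alpha n y * sgn2 (tr n (x * y))
      = \<i> ^ wt alpha n (x + y) * ((-1) ^ c * (-1) ^ c)"
    using A B by (simp add: tr_basis_sum_mult sgn2_of_nat[OF char2] c_def)
  then show ?thesis by (simp flip: power_add)
qed

lemma additive_character_eq_sgn2_tr:
  fixes chi :: "'a \<Rightarrow> complex"
  assumes add: "\<And>x y. chi (x + y) = chi x * chi y" and zero: "chi 0 = 1"
  obtains lam where "\<And>x. chi x = sgn2 (tr n (lam * x))"
proof -
  define T where "T = {j. j < n \<and> chi (alpha j) = -1}"
  have T: "T \<subseteq> {..<n}" by (auto simp: T_def)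
  have sign: "chi x = 1 \<or> chi x = -1" for x
    using add[of x x] zero square_eq_1_iff[of "chi x"] by (simp add: add_self_eq_zero[OF char2])
  have "chi x = sgn2 (tr n (basis_sum T * x))" for x
  proof -
    obtain S where S: "S \<subseteq> {..<n}" "x = basis_sum S" by (rule obtain_basis_sum)
    have fin: "finite S" using S finite_subset by blast
    have "chi x = (\<Prod>i\<in>S. chi (alpha i))"
      unfolding S(2) basis_sum_def using fin by (induction S rule: finite_induct) (simp_all add: add zero)
    also have "\<dots> = (\<Prod>i\<in>S. if i \<in> T then -1 else 1)"
      using S sign by (intro prod.cong) (auto simp: T_def)
    also have "\<dots> = (-1) ^ card (T \<inter> S)"
      using fin by (simp add: prod.If_cases Int_def conj_commute)
    also have "\<dots> = sgn2 (tr n (basis_sum T * x))"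
      using S T by (simp add: tr_basis_sum_mult sgn2_of_nat[OF char2])
    finally show ?thesis .
  qed
  then show ?thesis by (rule that)
qed

end

locale even_self_dual_gf2n = self_dual_gf2n +
  assumes even_n: "even n" and two_le_n: "2 \<le> n"
begin

lemma is_bit_tr [simp]: "is_bit (tr n (x::'a))"
  by (rule tr_is_bit[OF char2 card_UNIV])

lemma is_bit_Qfun [simp]: "is_bit (Qfun n (x::'a))"
  by (rule Qfun_is_bit[OF char2 card_UNIV even_n])

lemma i_power_wt_factorization:
  obtains lam where
    "\<And>x. \<i> ^ wt alpha n x = sgn2 (tr n (lam * x)) * sgn2 (Qfun n x) * ipow_bit (tr n x)"
proof -
  define chi where "chi x = \<i> ^ wt alpha n x * sgn2 (Qfun n x) * cnj (ipow_bit (tr n x))" for x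
  have "chi (x + y) = chi x * chi y" for x y
  proof -
    define a where "a = sgn2 (tr n (x * y))"
    define b where "b = sgn2 (tr n x * tr n y)"
    have Q: "sgn2 (Qfun n (x + y)) = sgn2 (Qfun n x) * sgn2 (Qfun n y) * b * a"
      unfolding Qfun_add[OF char2 card_UNIV even_n two_le_n] a_def b_def
      by (simp add: sgn2_add[OF char2] is_bit_add[OF char2] is_bit_mult)
    have C: "cnj (ipow_bit (tr n (x + y))) = cnj (ipow_bit (tr n x)) * cnj (ipow_bit (tr n y)) * b"
      unfolding tr_add[OF char2] b_def by (rule cnj_ipow_bit_add[OF char2 is_bit_tr is_bit_tr])
    have "chi (x + y) = chi x * chi y * (a * a) * (b * b)"
      unfolding chi_def i_power_wt_add Q C a_def[symmetric] by (simp add: ac_simps)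
    then show ?thesis by (simp add: a_def b_def)
  qed
  moreover have "chi 0 = 1"
    using wt_basis_sum[of "{}"] by (simp add: chi_def basis_sum_def Qfun_def zero_power
        sgn2_def ipow_bit_def)
  ultimately obtain lam where lam: "\<And>x. chi x = sgn2 (tr n (lam * x))"
    by (rule additive_character_eq_sgn2_tr) blast
  have "\<i> ^ wt alpha n x = sgn2 (tr n (lam * x)) * sgn2 (Qfun n x) * ipow_bit (tr n x)" for x
  proof -
    have "sgn2 (tr n (lam * x)) * sgn2 (Qfun n x) * ipow_bit (tr n x)
        = \<i> ^ wt alpha n x * (sgn2 (Qfun n x) * sgn2 (Qfun n x))
          * (cnj (ipow_bit (tr n x)) * ipow_bit (tr n x))"
      by (simp only: lam[symmetric] chi_def ac_simps)
    also have "\<dots> = \<i> ^ wt alpha n x"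
      by (simp add: ipow_bit_def)
    finally show ?thesis ..
  qed
  then show ?thesis by (rule that)
qed

lemma nega_transform_eq_walsh:
  assumes f: "\<And>x. is_bit (f x)"
    and lam: "\<And>x. \<i> ^ wt alpha n x = sgn2 (tr n (lam * x)) * sgn2 (Qfun n x) * ipow_bit (tr n x)"
  shows "(\<Sum>x\<in>UNIV. sgn2 (f x + tr n (u * x)) * \<i> ^ wt alpha n x)
    = (1 + \<i>) / 2 * of_int (walsh n (\<lambda>x. f x + Qfun n x) (u + lam))
      + (1 - \<i>) / 2 * of_int (walsh n (\<lambda>x. f x + Qfun n x) (u + lam + 1))"
proof -
  have "sgn2 (f x + tr n (u * x)) * \<i> ^ wt alpha n x
      = (1 + \<i>) / 2 * sgn2 (f x + Qfun n x + tr n ((u + lam) * x))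
        + (1 - \<i>) / 2 * sgn2 (f x + Qfun n x + tr n ((u + lam + 1) * x))" for x
  proof -
    define s where "s = sgn2 (f x + Qfun n x + tr n ((u + lam) * x))"
    have s: "s = sgn2 (f x + tr n (u * x)) * sgn2 (tr n (lam * x)) * sgn2 (Qfun n x)"
      unfolding s_def distrib_right tr_add[OF char2]
      by (simp add: sgn2_add[OF char2] is_bit_add[OF char2] f ac_simps)
    have s1: "sgn2 (f x + Qfun n x + tr n ((u + lam + 1) * x)) = s * sgn2 (tr n x)"
      unfolding s_def distrib_right[of "u + lam" 1] tr_add[OF char2]
      by (simp add: sgn2_add[OF char2] is_bit_add[OF char2] f ac_simps)
    have "sgn2 (f x + tr n (u * x)) * \<i> ^ wt alpha n x = s * ipow_bit (tr n x)"
      unfolding lam s by (simp add: ac_simps)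
    also have "\<dots> = (1 + \<i>) / 2 * s + (1 - \<i>) / 2 * (s * sgn2 (tr n x))"
      by (simp add: ipow_bit_eq is_bit_tr algebra_simps)
    finally show ?thesis unfolding s1 s_def .
  qed
  then have "(\<Sum>x\<in>UNIV. sgn2 (f x + tr n (u * x)) * \<i> ^ wt alpha n x)
      = (1 + \<i>) / 2 * (\<Sum>x\<in>UNIV. sgn2 (f x + Qfun n x + tr n ((u + lam) * x)))
        + (1 - \<i>) / 2 * (\<Sum>x\<in>UNIV. sgn2 (f x + Qfun n x + tr n ((u + lam + 1) * x)))"
    by (simp only: sum.distrib sum_distrib_left)
  then show ?thesis
    by (simp only: sum_sgn2_eq_walsh[of "\<lambda>x. f x + Qfun n x"])
qed

lemma negabent_iff_bent_add_Qfun: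
  assumes f: "\<And>x. is_bit (f x)"
  shows "negabent n alpha f \<longleftrightarrow> bent n (\<lambda>x. f x + Qfun n x)"
proof -
  obtain lam where lam:
    "\<And>x. \<i> ^ wt alpha n x = sgn2 (tr n (lam * x)) * sgn2 (Qfun n x) * ipow_bit (tr n x)"
    by (rule i_power_wt_factorization) blast
  let ?W = "walsh n (\<lambda>x. f x + Qfun n x)"
  have "negabent n alpha f \<longleftrightarrow> (\<forall>u. (?W (u + lam))\<^sup>2 + (?W (u + lam + 1))\<^sup>2 = 2 ^ (n + 1))"
    unfolding negabent_def nega_transform_eq_walsh[OF f lam] cmod_half_combination_eq_sqrt_iff ..
  also have "\<dots> \<longleftrightarrow> (\<forall>v. (?W v)\<^sup>2 + (?W (v + 1))\<^sup>2 = 2 ^ (n + 1))"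
  proof
    assume shifted: "\<forall>u. (?W (u + lam))\<^sup>2 + (?W (u + lam + 1))\<^sup>2 = 2 ^ (n + 1)"
    show "\<forall>v. (?W v)\<^sup>2 + (?W (v + 1))\<^sup>2 = 2 ^ (n + 1)"
    proof
      fix v
      have v: "v + lam + lam = v" by (simp add: add.assoc add_self_eq_zero[OF char2])
      show "(?W v)\<^sup>2 + (?W (v + 1))\<^sup>2 = 2 ^ (n + 1)"
        using shifted[rule_format, of "v + lam"] by (simp only: v)
    qed
  qed auto
  also have "\<dots> \<longleftrightarrow> (\<forall>v. (?W v)\<^sup>2 = 2 ^ n)"
  proof
    assume sum: "\<forall>v. (?W v)\<^sup>2 + (?W (v + 1))\<^sup>2 = 2 ^ (n + 1)"
    obtain k where n: "n = 2 * k" using even_n by blast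
    show "\<forall>v. (?W v)\<^sup>2 = 2 ^ n"
    proof
      fix v
      have "(?W v)\<^sup>2 + (?W (v + 1))\<^sup>2 = 2 ^ (2 * k + 1)" using sum n by simp
      then show "(?W v)\<^sup>2 = 2 ^ n" unfolding n by (rule sum_squares_eq_odd_power_two)
    qed
  qed simp
  also have "\<dots> \<longleftrightarrow> bent n (\<lambda>x. f x + Qfun n x)"
    by (simp add: bent_iff_walsh)
  finally show ?thesis .
qed

end

theorem corollary1:
  fixes n :: nat and alpha :: "nat \<Rightarrow> 'a::{field,finite}" and f :: "'a \<Rightarrow> 'a"
  assumes "even n" and "n \<ge> 2"
    and "card (UNIV :: 'a set) = 2 ^ n" and "(2::'a) = 0"
    and "self_dual_basis n alpha"
    and "\<forall>x. f x = 0 \<or> f x = 1"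
  shows "bent_negabent n alpha f \<longleftrightarrow> (bent n f \<and> bent n (\<lambda>x. f x + Qfun n x))"
proof -
  interpret even_self_dual_gf2n n alpha
    using assms by unfold_locales auto
  have "\<And>x. is_bit (f x)" using assms(6) by (simp add: is_bit_def)
  then show ?thesis
    unfolding bent_negabent_def by (simp add: negabent_iff_bent_add_Qfun)
qed

end
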